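(* Let $\Omega\subset B(\mathcal H)^d$ be an NC domain with exhausting sequence $\{\Omega_k\}$, and let $f:\Omega\to B(\mathcal H)^r$ be an NC function. Then: (a) for each $k$, $f(\Omega_k)$ is norm-bounded; (b) if $x_1,x_2,\dots$ is a sequence in $\Omega$ of length $l\in\mathbb N\cup\{\infty\}$ and $s:\mathcal H\to\mathcal H^{(l)}$ is a bounded invertible linear map with $s^{-1}\big(\bigoplus_n x_n\big)s\in\Omega$, then $\sup_n\|f(x_n)\|<\infty$ and $$f\Big(s^{-1}\Big(\bigoplus_n x_n\Big)s\Big)=s^{-1}\Big(\bigoplus_n f(x_n)\Big)s.$$
   Context: Throughout, $\mathcal H$ is an infinite-dimensional separable complex Hilbert space, $B(\mathcal H)$ the bounded operators with the operator norm, and $\mathcal H^{(l)}$ ($l\in\mathbb N\cup\{\infty\}$) the direct sum of $l$ copies of $\mathcal H$. $B(\mathcal H)^d$ has the norm $\|x\|=\max_i\|x^i\|$. Operations on tuples are componentwise: for bounded invertible linear $s:\mathcal H\to\mathcal H^{(l)}$ and $z\in B(\mathcal H^{(l)})^d$, $s^{-1}zs=(s^{-1}z^1s,\dots,s^{-1}z^ds)$; for a finite or countable sequence $x_1,x_2,\dots$ in $B(\mathcal H)^d$ of length $l$ (uniformly bounded when $l=\infty$), $\bigoplus_n x_n\in B(\mathcal H^{(l)})^d$ has $i$-th entry $\bigoplus_n x_n^i$; block matrices of tuples are defined entrywise per coordinate. A set is unitarily invariant if $u^*xu$ lies in it for each of its elements $x$ and each unitary $u\in B(\mathcal H)$. NC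 domain: $\Omega\subset B(\mathcal H)^d$ is an NC domain if there are subsets $\Omega_1,\Omega_2,\dots$ of $\Omega$ (an exhausting sequence) with (1) $\Omega_k\subset\mathrm{int}\,\Omega_{k+1}$ (norm interior) and $\Omega=\bigcup_k\Omega_k$; (2) each $\Omega_k$ norm-bounded and unitarily invariant; (3) for every sequence $x_1,x_2,\dots$ in $\Omega_k$ of length $l\in\mathbb N\cup\{\infty\}$ there is a unitary $u:\mathcal H\to\mathcal H^{(l)}$ with $u^{-1}(\bigoplus_n x_n)u\in\Omega_k$. NC function: $f:\Omega\to B(\mathcal H)^r$ on an NC domain is NC if whenever $x,y\in\Omega$ and $s:\mathcal H\to\mathcal H^{(2)}$ is bounded, linear, invertible with $s^{-1}\begin{bmatrix}x&0\\0&y\end{bmatrix}s\in\Omega$, then $f\Big(s^{-1}\begin{bmatrix}x&0\\0&y\end{bmatrix}s\Big)=s^{-1}\begin{bmatrix}f(x)&0\\0&f(y)\end{bmatrix}s$. *)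

theory Defs
  imports "HOL-Analysis.Analysis" "HOL-Library.Extended_Nat"
begin

text \<open>Concrete model: the infinite-dimensional separable complex Hilbert space H is
  l2(nat); vectors of an l2 space over an index set I are functions 'i => complex
  vanishing outside I and square-summable on I.  Bounded operators are represented
  as functions on all of 'i => complex that are linear and bounded on the l2 space
  and send everything outside the l2 space to 0 (so that HOL equality is operator
  equality).\<close>

definition l2v :: "'i set \<Rightarrow> ('i \<Rightarrow> complex) set" where
  "l2v I = {x. (\<forall>i. i \<notin> I \<longrightarrow> x i = 0) \<and> (\<lambda>i. (cmod (x i))^2) summable_on I}"

definition vnorm :: "('i \<Rightarrow> complex) \<Rightarrow> real" where
  "vnorm x = sqrt (\<Sum>\<^sub>\<infinity>i. (cmod (x i))^2)"

definition bop :: "'i set \<Rightarrow> 'j set \<Rightarrow> (('i \<Rightarrow> complex) \<Rightarrow> ('j \<Rightarrow> complex)) set" where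
  "bop I J = {T. (\<forall>x\<in>l2v I. T x \<in> l2v J)
     \<and> (\<forall>x\<in>l2v I. \<forall>y\<in>l2v I. \<forall>a b. T (\<lambda>i. a * x i + b * y i) = (\<lambda>j. a * T x j + b * T y j))
     \<and> (\<exists>C. \<forall>x\<in>l2v I. vnorm (T x) \<le> C * vnorm x)
     \<and> (\<forall>x. x \<notin> l2v I \<longrightarrow> T x = (\<lambda>_. 0))}"

definition oid :: "'i set \<Rightarrow> ('i \<Rightarrow> complex) \<Rightarrow> ('i \<Rightarrow> complex)" where
  "oid I = (\<lambda>x. if x \<in> l2v I then x else (\<lambda>_. 0))"

definition binvertible :: "'i set \<Rightarrow> 'j set \<Rightarrow> (('i \<Rightarrow> complex) \<Rightarrow> ('j \<Rightarrow> complex)) \<Rightarrow> bool" where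
  "binvertible I J s \<longleftrightarrow> s \<in> bop I J \<and> (\<exists>t\<in>bop J I. t \<circ> s = oid I \<and> s \<circ> t = oid J)"

definition binv :: "'i set \<Rightarrow> 'j set \<Rightarrow> (('i \<Rightarrow> complex) \<Rightarrow> ('j \<Rightarrow> complex))
    \<Rightarrow> (('j \<Rightarrow> complex) \<Rightarrow> ('i \<Rightarrow> complex))" where
  "binv I J s = (SOME t. t \<in> bop J I \<and> t \<circ> s = oid I \<and> s \<circ> t = oid J)"

definition unitary_op :: "'i set \<Rightarrow> 'j set \<Rightarrow> (('i \<Rightarrow> complex) \<Rightarrow> ('j \<Rightarrow> complex)) \<Rightarrow> bool" where
  "unitary_op I J u \<longleftrightarrow> u \<in> bop I J \<and> (\<forall>x\<in>l2v I. vnorm (u x) = vnorm x) \<and> u ` l2v I = l2v J"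

definition opnorm :: "'i set \<Rightarrow> (('i \<Rightarrow> complex) \<Rightarrow> ('j \<Rightarrow> complex)) \<Rightarrow> real" where
  "opnorm I T = Sup ((\<lambda>x. vnorm (T x)) ` {x \<in> l2v I. vnorm x \<le> 1})"

type_synonym vec = "nat \<Rightarrow> complex"
type_synonym hop = "vec \<Rightarrow> vec"   \<comment> \<open>elements of B(H) (when in bop UNIV UNIV)\<close>
type_synonym 'd tup = "'d \<Rightarrow> hop"  \<comment> \<open>elements of B(H)^d, d = CARD('d)\<close>

definition BH :: "hop set" where "BH = bop UNIV UNIV"

definition BHt :: "('d \<Rightarrow> hop) set" where "BHt = {x. \<forall>i. x i \<in> BH}"

definition tnorm :: "('d::finite) tup \<Rightarrow> real" where
  "tnorm x = Max (range (\<lambda>i. opnorm UNIV (x i)))"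

definition tdist :: "('d::finite) tup \<Rightarrow> 'd tup \<Rightarrow> real" where
  "tdist x y = tnorm (\<lambda>i v j. x i v j - y i v j)"

text \<open>index set of H^(l): copy index n (with n < l), then coordinate in H\<close>
definition Hl :: "enat \<Rightarrow> (nat \<times> nat) set" where
  "Hl l = {(n, j). enat n < l}"

definition dsum :: "enat \<Rightarrow> (nat \<Rightarrow> hop) \<Rightarrow> ((nat \<times> nat \<Rightarrow> complex) \<Rightarrow> (nat \<times> nat \<Rightarrow> complex))" where
  "dsum l xs = (\<lambda>v. if v \<in> l2v (Hl l)
      then (\<lambda>(n, j). if enat n < l then xs n (\<lambda>i. v (n, i)) j else 0) else (\<lambda>_. 0))"

definition tdsum :: "enat \<Rightarrow> (nat \<Rightarrow> 'd tup) \<Rightarrow> 'd \<Rightarrow> ((nat \<times> nat \<Rightarrow> complex) \<Rightarrow> (nat \<times> nat \<Rightarrow> complex))" where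
  "tdsum l xs = (\<lambda>i. dsum l (\<lambda>n. xs n i))"

definition tconj :: "enat \<Rightarrow> ((nat \<Rightarrow> complex) \<Rightarrow> (nat \<times> nat \<Rightarrow> complex))
    \<Rightarrow> ('d \<Rightarrow> ((nat \<times> nat \<Rightarrow> complex) \<Rightarrow> (nat \<times> nat \<Rightarrow> complex))) \<Rightarrow> 'd tup" where
  "tconj l s z = (\<lambda>i. binv UNIV (Hl l) s \<circ> z i \<circ> s)"

definition unitarily_invariant :: "'d tup set \<Rightarrow> bool" where
  "unitarily_invariant A \<longleftrightarrow> (\<forall>x\<in>A. \<forall>u. unitary_op UNIV UNIV u \<longrightarrow>
      (\<lambda>i. binv UNIV UNIV u \<circ> x i \<circ> u) \<in> A)"

definition norm_interior :: "('d::finite) tup set \<Rightarrow> 'd tup set" where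
  "norm_interior A = {x \<in> A. \<exists>e>0. \<forall>y\<in>BHt. tdist y x < e \<longrightarrow> y \<in> A}"

text \<open>Omk is an exhausting sequence for the NC domain Om (k indexed from 0)\<close>
definition exhausting_seq :: "('d::finite) tup set \<Rightarrow> (nat \<Rightarrow> 'd tup set) \<Rightarrow> bool" where
  "exhausting_seq Om Omk \<longleftrightarrow>
     Om \<subseteq> BHt \<and> (\<forall>k. Omk k \<subseteq> Om)
   \<and> (\<forall>k. Omk k \<subseteq> norm_interior (Omk (Suc k))) \<and> Om = (\<Union>k. Omk k)
   \<and> (\<forall>k. \<exists>C. \<forall>x\<in>Omk k. tnorm x \<le> C) \<and> (\<forall>k. unitarily_invariant (Omk k))
   \<and> (\<forall>k. \<forall>l xs. l \<noteq> 0 \<longrightarrow> (\<forall>n. enat n < l \<longrightarrow> xs n \<in> Omk k) \<longrightarrow>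
        (\<exists>u. unitary_op UNIV (Hl l) u \<and> tconj l u (tdsum l xs) \<in> Omk k))"

definition nc_domain :: "('d::finite) tup set \<Rightarrow> bool" where
  "nc_domain Om \<longleftrightarrow> (\<exists>Omk. exhausting_seq Om Omk)"

definition nc_function :: "('d::finite) tup set \<Rightarrow> ('d tup \<Rightarrow> ('r::finite) tup) \<Rightarrow> bool" where
  "nc_function Om f \<longleftrightarrow> nc_domain Om \<and> (\<forall>x\<in>Om. f x \<in> BHt)
   \<and> (\<forall>x\<in>Om. \<forall>y\<in>Om. \<forall>s. binvertible UNIV (Hl 2) s \<longrightarrow>
        tconj 2 s (tdsum 2 (\<lambda>n. if n = 0 then x else y)) \<in> Om \<longrightarrow>
        f (tconj 2 s (tdsum 2 (\<lambda>n. if n = 0 then x else y)))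
          = tconj 2 s (tdsum 2 (\<lambda>n. if n = 0 then f x else f y)))"

end

theory Submission
  imports Defs
begin

text \<open>The heart of the matter is that an NC function respects intertwinings: if \<open>x T = T y\<close>
  for a bounded \<open>T\<close>, then the shear \<open>[[1, T], [0, 1]]\<close> commutes with \<open>x \<oplus> y\<close>, so composing it with
  the unitary that puts \<open>x \<oplus> y\<close> into \<open>\<Omega>\<close> gives a second similarity with the same result;
  the NC property applied to both forces the shear to commute with \<open>f x \<oplus> f y\<close>, i.e.
  \<open>f x T = T f y\<close>.

  For (b), let \<open>X = s\<^sup>-\<^sup>1 (\<Oplus> x\<^sub>n) s\<close> and let \<open>T\<^sub>n\<close> be \<open>s\<close> followed by the projection onto the
  \<open>n\<close>-th summand; the uniform bound on the \<open>x\<^sub>n\<close> makes \<open>\<Oplus> x\<^sub>n\<close> bounded, and then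
  \<open>x\<^sub>n T\<^sub>n = T\<^sub>n X\<close>. Hence \<open>f(x\<^sub>n) T\<^sub>n = T\<^sub>n f(X)\<close> for all \<open>n\<close>: this bounds \<open>\<parallel>f(x\<^sub>n)\<parallel>\<close> by
  \<open>\<parallel>s f(X) s\<^sup>-\<^sup>1\<parallel>\<close> and says that \<open>s f(X) s\<^sup>-\<^sup>1\<close> is the block diagonal operator \<open>\<Oplus> f(x\<^sub>n)\<close>.
  For (a), if \<open>f\<close> were unbounded on \<open>\<Omega>\<^sub>k\<close>, the exhausting sequence would make the direct sum
  of a sequence along which \<open>f\<close> blows up unitarily equivalent to a point of \<open>\<Omega>\<^sub>k\<close>,
  contradicting the bound in (b).\<close>

definition sqnorm :: "('i \<Rightarrow> complex) \<Rightarrow> real" where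
  "sqnorm x = (\<Sum>\<^sub>\<infinity>i. (cmod (x i))^2)"

lemma vnorm_eq_sqrt_sqnorm: "vnorm x = sqrt (sqnorm x)"
  by (simp add: vnorm_def sqnorm_def)

lemma sqnorm_nonneg: "sqnorm x \<ge> 0"
  unfolding sqnorm_def by (rule infsum_nonneg) simp

lemma sqnorm_eq_vnorm_power2: "sqnorm x = (vnorm x)^2"
  by (simp add: vnorm_eq_sqrt_sqnorm sqnorm_nonneg)

lemma vnorm_nonneg: "vnorm x \<ge> 0"
  by (simp add: vnorm_eq_sqrt_sqnorm sqnorm_nonneg)

lemma sqnorm_le_imp_vnorm_le: "sqnorm a \<le> M * sqnorm b \<Longrightarrow> vnorm a \<le> sqrt M * vnorm b"
  by (simp add: vnorm_eq_sqrt_sqnorm real_sqrt_mult[symmetric])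

lemma vnorm_le_imp_sqnorm_le:
  assumes "vnorm a \<le> K * vnorm b" "K \<ge> 0"
  shows "sqnorm a \<le> K^2 * sqnorm b"
proof -
  have "(vnorm a)^2 \<le> (K * vnorm b)^2"
    using assms by (intro power_mono) (auto simp: vnorm_nonneg)
  then show ?thesis by (simp add: sqnorm_eq_vnorm_power2 power_mult_distrib)
qed

lemma l2v_iff_summable:
  "x \<in> l2v I \<longleftrightarrow> (\<forall>i. i \<notin> I \<longrightarrow> x i = 0) \<and> (\<lambda>i. (cmod (x i))^2) summable_on UNIV"
proof -
  have "(\<forall>i. i \<notin> I \<longrightarrow> x i = 0) \<Longrightarrow>
      (\<lambda>i. (cmod (x i))^2) summable_on I \<longleftrightarrow> (\<lambda>i. (cmod (x i))^2) summable_on UNIV"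
    by (rule summable_on_cong_neutral) simp_all
  then show ?thesis unfolding l2v_def by blast
qed

lemma l2v_summable: "x \<in> l2v I \<Longrightarrow> (\<lambda>i. (cmod (x i))^2) summable_on UNIV"
  by (simp add: l2v_iff_summable)

lemma l2v_vanishes: "x \<in> l2v I \<Longrightarrow> i \<notin> I \<Longrightarrow> x i = 0"
  by (simp add: l2v_iff_summable)

lemma zero_in_l2v [simp]: "(\<lambda>_. 0) \<in> l2v I"
  unfolding l2v_def by simp

lemma sqnorm_zero [simp]: "sqnorm (\<lambda>_. 0) = 0"
  by (simp add: sqnorm_def)

lemma norm_lincomb_power2_le:
  "(cmod (a * x + b * y))^2 \<le> 2 * (cmod a)^2 * (cmod x)^2 + 2 * (cmod b)^2 * (cmod y)^2"
proof -
  have "(cmod (a * x + b * y))^2 \<le> (cmod a * cmod x + cmod b * cmod y)^2"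
    by (intro power_mono) (metis norm_mult norm_triangle_ineq, simp)
  also have "\<dots> \<le> 2 * (cmod a * cmod x)^2 + 2 * (cmod b * cmod y)^2"
    using sum_squares_ge_zero[of "cmod a * cmod x - cmod b * cmod y" 0]
    by (simp add: power2_eq_square algebra_simps)
  finally show ?thesis by (simp add: power_mult_distrib)
qed

lemma
  assumes "x \<in> l2v I" "y \<in> l2v I"
  shows lincomb_in_l2v: "(\<lambda>i. a * x i + b * y i) \<in> l2v I"
    and sqnorm_lincomb_le:
      "sqnorm (\<lambda>i. a * x i + b * y i) \<le> 2 * (cmod a)^2 * sqnorm x + 2 * (cmod b)^2 * sqnorm y"
proof -
  let ?bound = "\<lambda>i. 2 * (cmod a)^2 * (cmod (x i))^2 + 2 * (cmod b)^2 * (cmod (y i))^2"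
  have bound: "?bound summable_on UNIV"
    using l2v_summable[OF assms(1)] l2v_summable[OF assms(2)]
    by (intro summable_on_add summable_on_cmult_right)
  have summable: "(\<lambda>i. (cmod (a * x i + b * y i))^2) summable_on UNIV"
    by (rule summable_on_comparison_test[OF bound]) (simp_all add: norm_lincomb_power2_le)
  then show "(\<lambda>i. a * x i + b * y i) \<in> l2v I"
    using assms(1,2)[THEN l2v_vanishes] by (simp add: l2v_iff_summable)
  have "sqnorm (\<lambda>i. a * x i + b * y i) \<le> infsum ?bound UNIV"
    unfolding sqnorm_def by (rule infsum_mono[OF summable bound]) (simp add: norm_lincomb_power2_le)
  also have "\<dots> = 2 * (cmod a)^2 * sqnorm x + 2 * (cmod b)^2 * sqnorm y"
    unfolding sqnorm_def using l2v_summable[OF assms(1)] l2v_summable[OF assms(2)]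
    by (subst infsum_add) (auto intro!: summable_on_cmult_right simp: infsum_cmult_right)
  finally show "sqnorm (\<lambda>i. a * x i + b * y i) \<le> 2 * (cmod a)^2 * sqnorm x + 2 * (cmod b)^2 * sqnorm y" .
qed

lemma sqnorm_scale:
  assumes "x \<in> l2v I" shows "sqnorm (\<lambda>i. c * x i) = (cmod c)^2 * sqnorm x"
  unfolding sqnorm_def using l2v_summable[OF assms]
  by (simp add: norm_mult power_mult_distrib infsum_cmult_right)

lemma sqnorm_eq_0_iff:
  assumes "x \<in> l2v I"
  shows "sqnorm x = 0 \<longleftrightarrow> x = (\<lambda>_. 0)"
proof
  assume "sqnorm x = 0"
  have "(\<Sum>\<^sub>\<infinity>j\<in>{i}. (cmod (x j))^2) \<le> sqnorm x" for i
    unfolding sqnorm_def by (rule infsum_mono2) (auto intro: l2v_summable[OF assms])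
  with \<open>sqnorm x = 0\<close> show "x = (\<lambda>_. 0)" by (simp add: fun_eq_iff)
qed simp

section \<open>Bounded operators, inverses and unitaries\<close>

lemma bop_maps_l2v: "T \<in> bop I J \<Longrightarrow> x \<in> l2v I \<Longrightarrow> T x \<in> l2v J"
  unfolding bop_def by simp

lemma bop_outside: "T \<in> bop I J \<Longrightarrow> x \<notin> l2v I \<Longrightarrow> T x = (\<lambda>_. 0)"
  unfolding bop_def by simp

lemma bop_apply_in_l2v: "T \<in> bop I J \<Longrightarrow> T x \<in> l2v J"
  by (cases "x \<in> l2v I") (simp_all add: bop_maps_l2v bop_outside)

lemma bop_linear:
  "T \<in> bop I J \<Longrightarrow> x \<in> l2v I \<Longrightarrow> y \<in> l2v I \<Longrightarrow>
    T (\<lambda>i. a * x i + b * y i) = (\<lambda>j. a * T x j + b * T y j)"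
  unfolding bop_def by simp

lemma bop_zero: "T \<in> bop I J \<Longrightarrow> T (\<lambda>_. 0) = (\<lambda>_. 0)"
  using bop_linear[of T I J "\<lambda>_. 0" "\<lambda>_. 0" 0 0] by simp

lemma bop_add: "T \<in> bop I J \<Longrightarrow> x \<in> l2v I \<Longrightarrow> y \<in> l2v I \<Longrightarrow>
    T (\<lambda>i. x i + y i) = (\<lambda>j. T x j + T y j)"
  using bop_linear[of T I J x y 1 1] by simp

lemma bop_diff: "T \<in> bop I J \<Longrightarrow> x \<in> l2v I \<Longrightarrow> y \<in> l2v I \<Longrightarrow>
    T (\<lambda>i. x i - y i) = (\<lambda>j. T x j - T y j)"
  using bop_linear[of T I J x y 1 "-1"] by simp

lemma bop_scale: "T \<in> bop I J \<Longrightarrow> x \<in> l2v I \<Longrightarrow> T (\<lambda>i. c * x i) = (\<lambda>j. c * T x j)"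
  using bop_linear[of T I J x x c 0] by simp

lemma bop_sqnorm_bound:
  assumes "T \<in> bop I J"
  obtains C where "C \<ge> 0" "\<And>x. x \<in> l2v I \<Longrightarrow> sqnorm (T x) \<le> C * sqnorm x"
proof -
  obtain C where C: "\<And>x. x \<in> l2v I \<Longrightarrow> vnorm (T x) \<le> C * vnorm x"
    using assms unfolding bop_def by blast
  have "vnorm (T x) \<le> max C 0 * vnorm x" if "x \<in> l2v I" for x
    using C[OF that] mult_right_mono[of C "max C 0" "vnorm x"] vnorm_nonneg[of x] by linarith
  then show thesis
    by (intro that[of "(max C 0)^2"] vnorm_le_imp_sqnorm_le) auto
qed

lemma bopI:
  assumes "\<And>x. x \<in> l2v I \<Longrightarrow> T x \<in> l2v J"
    and "\<And>x y a b. x \<in> l2v I \<Longrightarrow> y \<in> l2v I \<Longrightarrow>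
      T (\<lambda>i. a * x i + b * y i) = (\<lambda>j. a * T x j + b * T y j)"
    and "\<And>x. x \<in> l2v I \<Longrightarrow> sqnorm (T x) \<le> C * sqnorm x"
    and "\<And>x. x \<notin> l2v I \<Longrightarrow> T x = (\<lambda>_. 0)"
  shows "T \<in> bop I J"
proof -
  have "sqnorm (T x) \<le> max C 0 * sqnorm x" if "x \<in> l2v I" for x
    using assms(3)[OF that] mult_right_mono[of C "max C 0" "sqnorm x"] sqnorm_nonneg[of x] by linarith
  then have "\<forall>x\<in>l2v I. vnorm (T x) \<le> sqrt (max C 0) * vnorm x"
    by (simp add: sqnorm_le_imp_vnorm_le)
  then show ?thesis unfolding bop_def using assms(1,2,4) by blast
qed

lemma bop_comp:
  assumes A: "A \<in> bop I J" and B: "B \<in> bop J K"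
  shows "B \<circ> A \<in> bop I K"
proof -
  obtain Ca where Ca: "Ca \<ge> 0" "\<And>x. x \<in> l2v I \<Longrightarrow> sqnorm (A x) \<le> Ca * sqnorm x"
    using bop_sqnorm_bound[OF A] by blast
  obtain Cb where Cb: "Cb \<ge> 0" "\<And>x. x \<in> l2v J \<Longrightarrow> sqnorm (B x) \<le> Cb * sqnorm x"
    using bop_sqnorm_bound[OF B] by blast
  show ?thesis
  proof (rule bopI[where C = "Cb * Ca"])
    fix x assume x: "x \<in> l2v I"
    show "(B \<circ> A) x \<in> l2v K" using x by (simp add: bop_maps_l2v[OF B] bop_maps_l2v[OF A])
    have "sqnorm (B (A x)) \<le> Cb * sqnorm (A x)" using Cb(2) bop_maps_l2v[OF A x] .
    also have "\<dots> \<le> Cb * (Ca * sqnorm x)" using Ca(2)[OF x] Cb(1) by (rule mult_left_mono)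
    finally show "sqnorm ((B \<circ> A) x) \<le> Cb * Ca * sqnorm x" by (simp add: mult.assoc)
  next
    fix x y a b assume "x \<in> l2v I" "y \<in> l2v I"
    then show "(B \<circ> A) (\<lambda>i. a * x i + b * y i) = (\<lambda>j. a * (B \<circ> A) x j + b * (B \<circ> A) y j)"
      by (simp add: bop_linear[OF A] bop_linear[OF B] bop_maps_l2v[OF A])
  qed (simp add: bop_outside[OF A] bop_zero[OF B])
qed

lemma oid_apply: "x \<in> l2v I \<Longrightarrow> oid I x = x"
  by (simp add: oid_def)

lemma oid_in_bop: "oid I \<in> bop I I"
  by (rule bopI[where C = 1]) (simp_all add: oid_def lincomb_in_l2v)

lemma bop_comp_oid: "T \<in> bop I J \<Longrightarrow> T \<circ> oid I = T"
  by (rule ext) (simp add: oid_def bop_outside bop_zero)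

lemma oid_comp_bop: "T \<in> bop I J \<Longrightarrow> oid J \<circ> T = T"
  by (rule ext) (simp add: oid_apply bop_apply_in_l2v)

lemma
  assumes "binvertible I J s"
  shows binvertible_imp_bop: "s \<in> bop I J"
    and binv_in_bop: "binv I J s \<in> bop J I"
    and binv_comp_self: "binv I J s \<circ> s = oid I"
    and self_comp_binv: "s \<circ> binv I J s = oid J"
proof -
  have "\<exists>t. t \<in> bop J I \<and> t \<circ> s = oid I \<and> s \<circ> t = oid J" and "s \<in> bop I J"
    using assms unfolding binvertible_def by blast+
  from someI_ex[OF this(1)] this(2) show "s \<in> bop I J" "binv I J s \<in> bop J I"
      "binv I J s \<circ> s = oid I" "s \<circ> binv I J s = oid J"
    unfolding binv_def by blast+
qed

lemma binv_apply_self: "binvertible I J s \<Longrightarrow> x \<in> l2v I \<Longrightarrow> binv I J s (s x) = x"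
  using binv_comp_self[of I J s] by (metis comp_apply oid_apply)

lemma self_apply_binv: "binvertible I J s \<Longrightarrow> y \<in> l2v J \<Longrightarrow> s (binv I J s y) = y"
  using self_comp_binv[of I J s] by (metis comp_apply oid_apply)

lemma binvertibleI_binv_eq:
  assumes s: "s \<in> bop I J" and t: "t \<in> bop J I" and "t \<circ> s = oid I" "s \<circ> t = oid J"
  shows "binvertible I J s" "binv I J s = t"
proof -
  show inv: "binvertible I J s" unfolding binvertible_def using assms by blast
  have "binv I J s = binv I J s \<circ> (s \<circ> t)"
    using \<open>s \<circ> t = oid J\<close> bop_comp_oid[OF binv_in_bop[OF inv]] by simp
  also have "\<dots> = t"
    using binv_comp_self[OF inv] oid_comp_bop[OF t] by (simp add: o_assoc)
  finally show "binv I J s = t" .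
qed

lemma binvertible_comp:
  assumes s: "binvertible I J s" and t: "binvertible J K t"
  shows "binvertible I K (t \<circ> s)" "binv I K (t \<circ> s) = binv I J s \<circ> binv J K t"
proof -
  have "(binv I J s \<circ> binv J K t) \<circ> (t \<circ> s) = binv I J s \<circ> ((binv J K t \<circ> t) \<circ> s)"
    by (simp add: o_assoc)
  also have "\<dots> = oid I"
    using binv_comp_self[OF t] oid_comp_bop[OF binvertible_imp_bop[OF s]] binv_comp_self[OF s] by simp
  finally have left: "(binv I J s \<circ> binv J K t) \<circ> (t \<circ> s) = oid I" .
  have "(t \<circ> s) \<circ> (binv I J s \<circ> binv J K t) = t \<circ> ((s \<circ> binv I J s) \<circ> binv J K t)"
    by (simp add: o_assoc)
  also have "\<dots> = oid K"
    using self_comp_binv[OF s] oid_comp_bop[OF binv_in_bop[OF t]] self_comp_binv[OF t] by simp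
  finally have right: "(t \<circ> s) \<circ> (binv I J s \<circ> binv J K t) = oid K" .
  have "t \<circ> s \<in> bop I K" "binv I J s \<circ> binv J K t \<in> bop K I"
    by (rule bop_comp[OF binvertible_imp_bop[OF s] binvertible_imp_bop[OF t]],
        rule bop_comp[OF binv_in_bop[OF t] binv_in_bop[OF s]])
  from binvertibleI_binv_eq[OF this left right]
  show "binvertible I K (t \<circ> s)" "binv I K (t \<circ> s) = binv I J s \<circ> binv J K t" .
qed

lemma binv_conj_cancel:
  assumes s: "binvertible I J s" and "A \<in> bop J J" "B \<in> bop J J"
    and "binv I J s \<circ> A \<circ> s = binv I J s \<circ> B \<circ> s"
  shows "A = B"
proof -
  have "C = s \<circ> (binv I J s \<circ> C \<circ> s) \<circ> binv I J s" if "C \<in> bop J J" for C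
  proof -
    have "s \<circ> (binv I J s \<circ> C \<circ> s) \<circ> binv I J s = (s \<circ> binv I J s) \<circ> C \<circ> (s \<circ> binv I J s)"
      by (simp add: o_assoc)
    then show ?thesis using that self_comp_binv[OF s] by (simp add: oid_comp_bop bop_comp_oid)
  qed
  then show ?thesis using assms by metis
qed

lemma unitary_op_inj_on:
  assumes "unitary_op I J u"
  shows "inj_on u (l2v I)"
proof (rule inj_onI)
  fix x y assume x: "x \<in> l2v I" and y: "y \<in> l2v I" and "u x = u y"
  have u: "u \<in> bop I J" and iso: "\<And>z. z \<in> l2v I \<Longrightarrow> vnorm (u z) = vnorm z"
    using assms unfolding unitary_op_def by auto
  have d: "(\<lambda>i. x i - y i) \<in> l2v I" using lincomb_in_l2v[OF x y, of 1 "-1"] by simp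
  have "u (\<lambda>i. x i - y i) = (\<lambda>_. 0)" using bop_diff[OF u x y] \<open>u x = u y\<close> by simp
  then have "sqnorm (\<lambda>i. x i - y i) = 0"
    using iso[OF d] by (simp add: sqnorm_eq_vnorm_power2 vnorm_def)
  then show "x = y" using sqnorm_eq_0_iff[OF d] by (simp add: fun_eq_iff)
qed

lemma unitary_op_imp_binvertible:
  assumes U: "unitary_op I J u"
  shows "binvertible I J u"
proof -
  have u: "u \<in> bop I J" and iso: "\<And>x. x \<in> l2v I \<Longrightarrow> vnorm (u x) = vnorm x"
    and onto: "u ` l2v I = l2v J"
    using U unfolding unitary_op_def by auto
  note inj = unitary_op_inj_on[OF U]
  define t where "t = (\<lambda>y. if y \<in> l2v J then inv_into (l2v I) u y else (\<lambda>_. 0))"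
  have t_in: "t y \<in> l2v I" and ut: "u (t y) = y" if "y \<in> l2v J" for y
    using that onto by (auto simp: t_def inv_into_into f_inv_into_f)
  have tu: "t (u x) = x" if "x \<in> l2v I" for x
    using that bop_maps_l2v[OF u that] inj by (simp add: t_def)
  have t: "t \<in> bop J I"
  proof (rule bopI[where C = 1])
    fix x y a b assume x: "x \<in> l2v J" and y: "y \<in> l2v J"
    have "t (\<lambda>j. a * x j + b * y j) = t (u (\<lambda>i. a * t x i + b * t y i))"
      using bop_linear[OF u t_in[OF x] t_in[OF y]] ut[OF x] ut[OF y] by simp
    also have "\<dots> = (\<lambda>i. a * t x i + b * t y i)" by (rule tu[OF lincomb_in_l2v[OF t_in[OF x] t_in[OF y]]])
    finally show "t (\<lambda>i. a * x i + b * y i) = (\<lambda>j. a * t x j + b * t y j)" .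
  next
    fix x assume x: "x \<in> l2v J"
    show "sqnorm (t x) \<le> 1 * sqnorm x" using iso[OF t_in[OF x]] ut[OF x] by (simp add: sqnorm_eq_vnorm_power2)
  qed (use t_in in \<open>auto simp: t_def\<close>)
  have "(t \<circ> u) x = oid I x" for x
    using tu[of "\<lambda>_. 0"] by (cases "x \<in> l2v I") (simp_all add: tu oid_def bop_outside[OF u] bop_zero[OF u])
  moreover have "(u \<circ> t) y = oid J y" for y
    by (cases "y \<in> l2v J") (simp_all add: ut oid_apply, simp add: oid_def t_def bop_zero[OF u])
  ultimately show ?thesis using binvertibleI_binv_eq(1)[OF u t] by (simp add: fun_eq_iff)
qed

lemma opnorm_bdd_above:
  assumes "T \<in> bop I J"
  shows "bdd_above ((\<lambda>x. vnorm (T x)) ` {x \<in> l2v I. vnorm x \<le> 1})"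
proof -
  obtain C where C: "C \<ge> 0" "\<And>x. x \<in> l2v I \<Longrightarrow> sqnorm (T x) \<le> C * sqnorm x"
    using bop_sqnorm_bound[OF assms] by blast
  show ?thesis
  proof (rule bdd_aboveI2)
    fix x assume x: "x \<in> {x \<in> l2v I. vnorm x \<le> 1}"
    then have "sqnorm x \<le> 1"
      using power_le_one[OF vnorm_nonneg[of x]] by (simp add: sqnorm_eq_vnorm_power2)
    then have "sqnorm (T x) \<le> C" using C x mult_left_le[of "sqnorm x" C] by fastforce
    then show "vnorm (T x) \<le> sqrt C" by (simp add: vnorm_eq_sqrt_sqnorm)
  qed
qed

lemma opnorm_nonneg:
  assumes "T \<in> bop I J"
  shows "opnorm I T \<ge> 0"
proof -
  have "vnorm (T (\<lambda>_. 0)) \<le> opnorm I T"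
    unfolding opnorm_def by (rule cSup_upper[OF _ opnorm_bdd_above[OF assms]]) (simp add: vnorm_def)
  then show ?thesis by (simp add: bop_zero[OF assms] vnorm_def)
qed

lemma opnorm_least:
  assumes "K \<ge> 0" and "\<And>x. x \<in> l2v I \<Longrightarrow> vnorm (T x) \<le> K * vnorm x"
  shows "opnorm I T \<le> K"
  unfolding opnorm_def
proof (rule cSup_least)
  show "(\<lambda>x. vnorm (T x)) ` {x \<in> l2v I. vnorm x \<le> 1} \<noteq> {}"
  proof -
    have "(\<lambda>_. 0) \<in> {x \<in> l2v I. vnorm x \<le> 1}" by (simp add: vnorm_def)
    then show ?thesis by blast
  qed
next
  fix r assume "r \<in> (\<lambda>x. vnorm (T x)) ` {x \<in> l2v I. vnorm x \<le> 1}"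
  then obtain x where "x \<in> l2v I" "vnorm x \<le> 1" "r = vnorm (T x)" by blast
  then show "r \<le> K" using assms mult_left_le[of "vnorm x" K] by fastforce
qed

lemma norm_apply_le_opnorm:
  assumes T: "T \<in> bop I J" and x: "x \<in> l2v I"
  shows "vnorm (T x) \<le> opnorm I T * vnorm x"
proof (cases "vnorm x = 0")
  case True
  then have "x = (\<lambda>_. 0)" using sqnorm_eq_0_iff[OF x] by (simp add: sqnorm_eq_vnorm_power2)
  then show ?thesis using bop_zero[OF T] by (simp add: vnorm_def)
next
  case False
  define r where "r = vnorm x"
  have r: "r > 0" using False vnorm_nonneg[of x] by (simp add: r_def)
  define c where "c = complex_of_real (1 / r)"
  have c: "(cmod c)^2 = 1 / r^2" using r by (simp add: c_def norm_divide power_divide)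
  have cx: "(\<lambda>i. c * x i) \<in> l2v I" using lincomb_in_l2v[OF x x, of c 0] by simp
  have "sqnorm (\<lambda>i. c * x i) = 1"
    using r by (simp add: sqnorm_scale[OF x] c sqnorm_eq_vnorm_power2 r_def)
  then have "vnorm (T (\<lambda>i. c * x i)) \<le> opnorm I T"
    unfolding opnorm_def using cx
    by (intro cSup_upper[OF _ opnorm_bdd_above[OF T]]) (simp add: vnorm_eq_sqrt_sqnorm)
  moreover have "vnorm (T (\<lambda>i. c * x i)) = vnorm (T x) / r"
    using r by (simp add: bop_scale[OF T x] vnorm_eq_sqrt_sqnorm sqnorm_scale[OF bop_maps_l2v[OF T x]]
        c real_sqrt_mult real_sqrt_divide)
  ultimately show ?thesis using r by (simp add: r_def divide_simps mult.commute)
qed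

lemma opnorm_le_tnorm: "opnorm UNIV ((x :: ('d::finite) tup) i) \<le> tnorm x"
  unfolding tnorm_def by (rule Max_ge) auto

lemma tnorm_leI: "(\<And>i. opnorm UNIV ((x :: ('d::finite) tup) i) \<le> C) \<Longrightarrow> tnorm x \<le> C"
  unfolding tnorm_def by (subst Max_le_iff) auto

section \<open>Block coordinates and direct sums\<close>

lemma Hl_iff [simp]: "(n, j) \<in> Hl l \<longleftrightarrow> enat n < l"
  by (simp add: Hl_def)

definition block_emb :: "nat \<Rightarrow> vec \<Rightarrow> (nat \<times> nat \<Rightarrow> complex)" where
  "block_emb n v = (if v \<in> l2v UNIV then (\<lambda>(m, j). if m = n then v j else 0) else (\<lambda>_. 0))"

definition block_proj :: "enat \<Rightarrow> nat \<Rightarrow> (nat \<times> nat \<Rightarrow> complex) \<Rightarrow> vec" where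
  "block_proj l n w = (if w \<in> l2v (Hl l) then (\<lambda>j. w (n, j)) else (\<lambda>_. 0))"

lemma
  fixes v :: vec
  assumes v: "v \<in> l2v UNIV" and n: "enat n < l"
  shows block_emb_in_l2v: "block_emb n v \<in> l2v (Hl l)"
    and sqnorm_block_emb: "sqnorm (block_emb n v) = sqnorm v"
proof -
  let ?g = "\<lambda>p. (cmod (block_emb n v p))^2"
  have outside: "?g p = 0" if "p \<in> UNIV - range (Pair n)" for p
    using that v by (cases p) (auto simp: block_emb_def)
  have row: "?g \<circ> Pair n = (\<lambda>j. (cmod (v j))^2)" using v by (simp add: block_emb_def fun_eq_iff)
  have "?g summable_on UNIV \<longleftrightarrow> ?g summable_on range (Pair n)"
    by (rule summable_on_cong_neutral) (use outside in auto)
  also have "\<dots> \<longleftrightarrow> (?g \<circ> Pair n) summable_on UNIV"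
    by (rule summable_on_reindex) (simp add: inj_on_def)
  finally show "block_emb n v \<in> l2v (Hl l)"
    using row l2v_summable[OF v] n by (simp add: l2v_iff_summable block_emb_def)
  have "infsum ?g UNIV = infsum ?g (range (Pair n))"
    by (rule infsum_cong_neutral) (use outside in auto)
  also have "\<dots> = infsum (?g \<circ> Pair n) UNIV"
    by (rule infsum_reindex) (simp add: inj_on_def)
  finally show "sqnorm (block_emb n v) = sqnorm v" using row by (simp add: sqnorm_def)
qed

lemma
  assumes w: "w \<in> l2v (Hl l)"
  shows row_in_l2v: "(\<lambda>j. w (n, j)) \<in> l2v UNIV"
    and sqnorm_row_le: "sqnorm (\<lambda>j. w (n, j)) \<le> sqnorm w"
proof -
  let ?g = "\<lambda>p. (cmod (w p))^2"
  have s: "?g summable_on UNIV" by (rule l2v_summable[OF w])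
  have sn: "?g summable_on range (Pair n)" by (rule summable_on_subset[OF s]) simp
  then show "(\<lambda>j. w (n, j)) \<in> l2v UNIV"
    by (subst (asm) summable_on_reindex) (simp_all add: inj_on_def l2v_iff_summable o_def)
  have "infsum ?g (range (Pair n)) \<le> infsum ?g UNIV"
    by (rule infsum_mono2[OF sn s]) simp_all
  moreover have "infsum ?g (range (Pair n)) = infsum (?g \<circ> Pair n) UNIV"
    by (rule infsum_reindex) (simp add: inj_on_def)
  ultimately show "sqnorm (\<lambda>j. w (n, j)) \<le> sqnorm w" by (simp add: sqnorm_def o_def)
qed

lemma sqnorm_eq_sum_rows:
  assumes "w \<in> l2v (Hl l)"
  shows "sqnorm w = (\<Sum>\<^sub>\<infinity>n. sqnorm (\<lambda>j. w (n, j)))"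
  using infsum_Sigma_banach[of "\<lambda>p. (cmod (w p))^2" UNIV "\<lambda>_. UNIV"] l2v_summable[OF assms]
  by (simp add: sqnorm_def)

lemma block_proj_apply: "w \<in> l2v (Hl l) \<Longrightarrow> block_proj l n w = (\<lambda>j. w (n, j))"
  by (simp add: block_proj_def)

lemma block_proj_in_bop: "block_proj l n \<in> bop (Hl l) UNIV"
  by (rule bopI[where C = 1]) (auto simp: block_proj_def row_in_l2v sqnorm_row_le lincomb_in_l2v)

lemma block_proj_block_emb: "enat n < l \<Longrightarrow> v \<in> l2v UNIV \<Longrightarrow> block_proj l n (block_emb n v) = v"
  using block_emb_in_l2v[of v n l] by (simp add: block_proj_def block_emb_def)

lemma block_emb_in_bop:
  assumes "enat n < l"
  shows "block_emb n \<in> bop UNIV (Hl l)"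
proof (rule bopI[where C = 1])
  fix x y :: vec and a b assume "x \<in> l2v UNIV" "y \<in> l2v UNIV"
  then show "block_emb n (\<lambda>i. a * x i + b * y i) = (\<lambda>j. a * block_emb n x j + b * block_emb n y j)"
    by (auto simp: lincomb_in_l2v fun_eq_iff block_emb_def)
qed (simp_all add: block_emb_in_l2v[OF _ assms] sqnorm_block_emb[OF _ assms], simp add: block_emb_def)

lemma dsum_apply:
  "w \<in> l2v (Hl l) \<Longrightarrow> dsum l A w (n, j) = (if enat n < l then A n (\<lambda>i. w (n, i)) j else 0)"
  by (simp add: dsum_def)

lemma dsum_in_bop:
  assumes A: "\<And>n. enat n < l \<Longrightarrow> A n \<in> bop UNIV UNIV" and "K \<ge> 0"
    and K: "\<And>n u. enat n < l \<Longrightarrow> u \<in> l2v UNIV \<Longrightarrow> sqnorm (A n u) \<le> K * sqnorm u"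
  shows "dsum l A \<in> bop (Hl l) (Hl l)"
proof (rule bopI[where C = K])
  fix w assume w: "w \<in> l2v (Hl l)"
  let ?g = "\<lambda>p. (cmod (dsum l A w p))^2"
  let ?G = "\<lambda>n. if enat n < l then sqnorm (A n (\<lambda>j. w (n, j))) else 0"
  have G_le: "?G n \<le> K * sqnorm (\<lambda>j. w (n, j))" for n
    using K[OF _ row_in_l2v[OF w]] \<open>K \<ge> 0\<close> by (simp add: sqnorm_nonneg)
  have rows: "(\<lambda>n. sqnorm (\<lambda>j. w (n, j))) summable_on UNIV"
    using summable_on_SigmaD[of "\<lambda>p. (cmod (w p))^2" UNIV "\<lambda>_. UNIV"] l2v_summable[OF w]
      l2v_summable[OF row_in_l2v[OF w]] by (simp add: sqnorm_def)
  have G: "?G summable_on UNIV"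
    by (rule summable_on_comparison_test[OF summable_on_cmult_right[OF rows, of K]])
      (use G_le in \<open>simp_all add: sqnorm_nonneg\<close>)
  have block: "((\<lambda>j. ?g (n, j)) has_sum ?G n) UNIV" for n
    using w has_sum_infsum[OF l2v_summable[OF bop_maps_l2v[OF A row_in_l2v[OF w]]]]
    by (simp add: dsum_apply sqnorm_def)
  have "?g summable_on UNIV \<times> UNIV"
    by (rule summable_on_SigmaI[OF block G]) simp
  then have "?g summable_on UNIV" by simp
  moreover have "dsum l A w p = 0" if "p \<notin> Hl l" for p
    using that w by (cases p) (simp add: dsum_apply)
  ultimately show "dsum l A w \<in> l2v (Hl l)" by (simp add: l2v_iff_summable)
  have "(?g has_sum infsum ?G UNIV) (UNIV \<times> UNIV)"
    by (rule has_sum_SigmaI[OF block has_sum_infsum[OF G]]) (simp add: \<open>?g summable_on UNIV\<close>)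
  then have "sqnorm (dsum l A w) = infsum ?G UNIV" by (simp add: sqnorm_def infsumI)
  also have "\<dots> \<le> (\<Sum>\<^sub>\<infinity>n. K * sqnorm (\<lambda>j. w (n, j)))"
    by (rule infsum_mono[OF G summable_on_cmult_right[OF rows, of K] G_le])
  also have "\<dots> = K * sqnorm w"
    using infsum_cmult_right[OF rows, of K] by (simp add: sqnorm_eq_sum_rows[OF w])
  finally show "sqnorm (dsum l A w) \<le> K * sqnorm w" .
next
  fix w z a b assume w: "w \<in> l2v (Hl l)" and z: "z \<in> l2v (Hl l)"
  show "dsum l A (\<lambda>p. a * w p + b * z p) = (\<lambda>p. a * dsum l A w p + b * dsum l A z p)"
    using lincomb_in_l2v[OF w z] w z
    by (auto simp: fun_eq_iff dsum_apply bop_linear[OF A row_in_l2v[OF w] row_in_l2v[OF z]])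
qed (simp add: dsum_def)

lemma bop_lincombI:
  assumes A: "A \<in> bop I J" and B: "B \<in> bop I J"
    and S: "\<And>x. x \<in> l2v I \<Longrightarrow> S x = (\<lambda>j. A x j + c * B x j)"
    and S_outside: "\<And>x. x \<notin> l2v I \<Longrightarrow> S x = (\<lambda>_. 0)"
  shows "S \<in> bop I J"
proof -
  obtain CA where CA: "\<And>x. x \<in> l2v I \<Longrightarrow> sqnorm (A x) \<le> CA * sqnorm x"
    using bop_sqnorm_bound[OF A] by blast
  obtain CB where "CB \<ge> 0" and CB: "\<And>x. x \<in> l2v I \<Longrightarrow> sqnorm (B x) \<le> CB * sqnorm x"
    using bop_sqnorm_bound[OF B] by blast
  show ?thesis
  proof (rule bopI[where C = "2 * CA + 2 * (cmod c)^2 * CB"])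
    fix x assume x: "x \<in> l2v I"
    have Ax: "A x \<in> l2v J" and Bx: "B x \<in> l2v J" using x A B by (simp_all add: bop_maps_l2v)
    show "S x \<in> l2v J" using lincomb_in_l2v[OF Ax Bx, of 1 c] S[OF x] by simp
    have "sqnorm (S x) \<le> 2 * sqnorm (A x) + 2 * (cmod c)^2 * sqnorm (B x)"
      using sqnorm_lincomb_le[OF Ax Bx, of 1 c] S[OF x] by simp
    also have "\<dots> \<le> 2 * (CA * sqnorm x) + 2 * (cmod c)^2 * (CB * sqnorm x)"
      using CA[OF x] CB[OF x] by (intro add_mono mult_left_mono) simp_all
    finally show "sqnorm (S x) \<le> (2 * CA + 2 * (cmod c)^2 * CB) * sqnorm x"
      by (simp add: algebra_simps)
  next
    fix x y a b assume "x \<in> l2v I" "y \<in> l2v I"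
    then show "S (\<lambda>i. a * x i + b * y i) = (\<lambda>j. a * S x j + b * S y j)"
      by (simp add: S lincomb_in_l2v bop_linear[OF A] bop_linear[OF B] fun_eq_iff algebra_simps)
  qed (rule S_outside)
qed

lemma enat_less_2_iff: "enat n < 2 \<longleftrightarrow> n < 2"
  by (metis enat_ord_simps(2) numeral_eq_enat)

definition pair_vec :: "vec \<Rightarrow> vec \<Rightarrow> (nat \<times> nat \<Rightarrow> complex)" where
  "pair_vec a b = (\<lambda>(n, j). if n = 0 then a j else if n = 1 then b j else 0)"

abbreviation (input) pair_seq :: "'a \<Rightarrow> 'a \<Rightarrow> nat \<Rightarrow> 'a" where
  "pair_seq x y \<equiv> (\<lambda>n. if n = 0 then x else y)"

lemma pair_vec_zero [simp]: "pair_vec (\<lambda>_. 0) (\<lambda>_. 0) = (\<lambda>_. 0)"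
  by (simp add: pair_vec_def fun_eq_iff)

lemma pair_vec_eq_iff: "pair_vec a b = pair_vec c d \<longleftrightarrow> a = c \<and> b = d"
  by (auto simp: pair_vec_def fun_eq_iff split: prod.splits)

lemma pair_vec_in_l2v:
  assumes "a \<in> l2v UNIV" "b \<in> l2v UNIV"
  shows "pair_vec a b \<in> l2v (Hl 2)"
proof -
  have "pair_vec a b = (\<lambda>p. 1 * block_emb 0 a p + 1 * block_emb 1 b p)"
    using assms by (auto simp: pair_vec_def block_emb_def)
  also have "\<dots> \<in> l2v (Hl 2)"
    using assms by (intro lincomb_in_l2v block_emb_in_l2v) (simp_all add: enat_less_2_iff)
  finally show ?thesis .
qed

lemma l2v_Hl2_cases:
  assumes w: "w \<in> l2v (Hl 2)"
  obtains a b where "w = pair_vec a b" "a \<in> l2v UNIV" "b \<in> l2v UNIV"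
proof
  show "w = pair_vec (\<lambda>j. w (0, j)) (\<lambda>j. w (1, j))"
    using l2v_vanishes[OF w] by (auto simp: pair_vec_def fun_eq_iff enat_less_2_iff)
qed (use row_in_l2v[OF w] in auto)

lemma dsum2_pair_vec:
  assumes "a \<in> l2v UNIV" "b \<in> l2v UNIV"
  shows "dsum 2 (pair_seq A B) (pair_vec a b) = pair_vec (A a) (B b)"
  using pair_vec_in_l2v[OF assms]
  by (auto simp: fun_eq_iff dsum_apply enat_less_2_iff pair_vec_def)

text \<open>\<open>shear T c\<close> is the block operator \<open>[[1, c T], [0, 1]]\<close> on \<open>H \<oplus> H\<close>.\<close>

definition shear :: "hop \<Rightarrow> complex \<Rightarrow> (nat \<times> nat \<Rightarrow> complex) \<Rightarrow> (nat \<times> nat \<Rightarrow> complex)" where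
  "shear T c w = (if w \<in> l2v (Hl 2) then (\<lambda>p. w p + c * block_emb 0 (T (block_proj 2 1 w)) p)
     else (\<lambda>_. 0))"

lemma shear_in_bop:
  assumes "T \<in> bop UNIV UNIV"
  shows "shear T c \<in> bop (Hl 2) (Hl 2)"
  by (rule bop_lincombI[OF oid_in_bop bop_comp[OF bop_comp[OF block_proj_in_bop assms]
          block_emb_in_bop]])
    (simp_all add: enat_less_2_iff shear_def oid_apply)

lemma shear_pair_vec:
  assumes T: "T \<in> bop UNIV UNIV" and "a \<in> l2v UNIV" "b \<in> l2v UNIV"
  shows "shear T c (pair_vec a b) = pair_vec (\<lambda>j. a j + c * T b j) b"
  using assms pair_vec_in_l2v[OF assms(2,3)] bop_maps_l2v[OF T assms(3)]
  by (auto simp: shear_def block_proj_apply block_emb_def pair_vec_def fun_eq_iff)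

lemma shear_comp_shear:
  assumes T: "T \<in> bop UNIV UNIV"
  shows "shear T c \<circ> shear T (-c) = oid (Hl 2)"
proof
  fix w show "(shear T c \<circ> shear T (-c)) w = oid (Hl 2) w"
  proof (cases "w \<in> l2v (Hl 2)")
    case True
    then obtain a b where ab: "w = pair_vec a b" "a \<in> l2v UNIV" "b \<in> l2v UNIV"
      by (rule l2v_Hl2_cases)
    have "(\<lambda>j. a j + - c * T b j) \<in> l2v UNIV"
      using lincomb_in_l2v[OF ab(2) bop_maps_l2v[OF T ab(3)], of 1 "-c"] by simp
    then show ?thesis using True ab by (simp add: shear_pair_vec[OF T] oid_apply)
  next
    case False
    then show ?thesis
      by (simp add: oid_def bop_outside[OF shear_in_bop[OF T] False] bop_zero[OF shear_in_bop[OF T]])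
  qed
qed

lemma
  assumes "T \<in> bop UNIV UNIV"
  shows binvertible_shear: "binvertible (Hl 2) (Hl 2) (shear T c)"
    and binv_shear: "binv (Hl 2) (Hl 2) (shear T c) = shear T (-c)"
  using binvertibleI_binv_eq[OF shear_in_bop[OF assms] shear_in_bop[OF assms]]
    shear_comp_shear[OF assms, of c] shear_comp_shear[OF assms, of "-c"] by simp_all

lemma dsum2_in_bop:
  assumes A: "A \<in> bop UNIV UNIV" and B: "B \<in> bop UNIV UNIV"
  shows "dsum 2 (pair_seq A B) \<in> bop (Hl 2) (Hl 2)"
proof -
  obtain CA where "CA \<ge> 0" and CA: "\<And>x. x \<in> l2v UNIV \<Longrightarrow> sqnorm (A x) \<le> CA * sqnorm x"
    using bop_sqnorm_bound[OF A] by blast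
  obtain CB where CB: "\<And>x. x \<in> l2v UNIV \<Longrightarrow> sqnorm (B x) \<le> CB * sqnorm x"
    using bop_sqnorm_bound[OF B] by blast
  have "sqnorm (pair_seq A B n x) \<le> max CA CB * sqnorm x" if "x \<in> l2v UNIV" for n x
    using CA[OF that] CB[OF that] sqnorm_nonneg[of x]
      mult_right_mono[of CA "max CA CB" "sqnorm x"] mult_right_mono[of CB "max CA CB" "sqnorm x"]
    by auto
  then show ?thesis
    using A B \<open>CA \<ge> 0\<close> by (intro dsum_in_bop[where K = "max CA CB"]) auto
qed

lemma shear_conj_dsum2_pair_vec:
  assumes T: "T \<in> bop UNIV UNIV" and A: "A \<in> bop UNIV UNIV" and B: "B \<in> bop UNIV UNIV"
    and a: "a \<in> l2v UNIV" and b: "b \<in> l2v UNIV"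
  shows "(shear T (-1) \<circ> dsum 2 (pair_seq A B) \<circ> shear T 1) (pair_vec a b)
    = pair_vec (\<lambda>j. A (\<lambda>i. a i + T b i) j - T (B b) j) (B b)"
proof -
  have Tb: "(\<lambda>i. a i + T b i) \<in> l2v UNIV"
    using lincomb_in_l2v[OF a bop_maps_l2v[OF T b], of 1 1] by simp
  show ?thesis
    using shear_pair_vec[OF T a b, of 1] dsum2_pair_vec[OF Tb b, of A B]
      shear_pair_vec[OF T bop_maps_l2v[OF A Tb] bop_maps_l2v[OF B b], of "-1"]
    by simp
qed

lemma shear_conj_dsum2_iff:
  assumes T: "T \<in> bop UNIV UNIV" and A: "A \<in> bop UNIV UNIV" and B: "B \<in> bop UNIV UNIV"
  shows "shear T (-1) \<circ> dsum 2 (pair_seq A B) \<circ> shear T 1 = dsum 2 (pair_seq A B)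
    \<longleftrightarrow> (\<forall>v\<in>l2v UNIV. A (T v) = T (B v))"
proof
  assume conj: "shear T (-1) \<circ> dsum 2 (pair_seq A B) \<circ> shear T 1 = dsum 2 (pair_seq A B)"
  show "\<forall>v\<in>l2v UNIV. A (T v) = T (B v)"
  proof
    fix v :: vec assume v: "v \<in> l2v UNIV"
    have "pair_vec (\<lambda>j. A (T v) j - T (B v) j) (B v) = pair_vec (\<lambda>_. 0) (B v)"
      using shear_conj_dsum2_pair_vec[OF T A B zero_in_l2v v] conj
        dsum2_pair_vec[OF zero_in_l2v v, of A B] by (simp add: bop_zero[OF A])
    then show "A (T v) = T (B v)" unfolding pair_vec_eq_iff by (simp add: fun_eq_iff)
  qed
next
  assume intertwines: "\<forall>v\<in>l2v UNIV. A (T v) = T (B v)"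
  show "shear T (-1) \<circ> dsum 2 (pair_seq A B) \<circ> shear T 1 = dsum 2 (pair_seq A B)"
  proof
    fix w
    show "(shear T (-1) \<circ> dsum 2 (pair_seq A B) \<circ> shear T 1) w = dsum 2 (pair_seq A B) w"
    proof (cases "w \<in> l2v (Hl 2)")
      case True
      then obtain a b where ab: "w = pair_vec a b" "a \<in> l2v UNIV" "b \<in> l2v UNIV"
        by (rule l2v_Hl2_cases)
      then show ?thesis
        using shear_conj_dsum2_pair_vec[OF T A B ab(2,3)] dsum2_pair_vec[OF ab(2,3)]
          bop_add[OF A ab(2) bop_maps_l2v[OF T ab(3)]] intertwines
        by simp
    next
      case False
      have "dsum 2 (pair_seq A B) (\<lambda>_. 0) = (\<lambda>_. 0)"
        using dsum2_pair_vec[OF zero_in_l2v zero_in_l2v, of A B] by (simp add: bop_zero[OF A] bop_zero[OF B])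
      moreover have "shear T 1 w = (\<lambda>_. 0)" "dsum 2 (pair_seq A B) w = (\<lambda>_. 0)"
        using False by (simp_all add: shear_def dsum_def)
      ultimately show ?thesis by (simp add: bop_zero[OF shear_in_bop[OF T]])
    qed
  qed
qed

lemma exhausting_seqE:
  assumes "exhausting_seq Om Omk"
  obtains "Om \<subseteq> BHt" "\<forall>k. Omk k \<subseteq> Om" "\<forall>k. Omk k \<subseteq> norm_interior (Omk (Suc k))"
    "Om = (\<Union>k. Omk k)" "\<forall>k. \<exists>C. \<forall>x\<in>Omk k. tnorm x \<le> C"
    "\<forall>k l xs. l \<noteq> 0 \<longrightarrow> (\<forall>n. enat n < l \<longrightarrow> xs n \<in> Omk k) \<longrightarrow>
      (\<exists>u. unitary_op UNIV (Hl l) u \<and> tconj l u (tdsum l xs) \<in> Omk k)"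
  using assms unfolding exhausting_seq_def by (elim conjE) (rule that; assumption)

lemma exhausting_seq_subset: "exhausting_seq Om Omk \<Longrightarrow> Omk k \<subseteq> Om"
  by (erule exhausting_seqE) (erule allE)

lemma exhausting_seq_Suc: "exhausting_seq Om Omk \<Longrightarrow> Omk k \<subseteq> Omk (Suc k)"
  by (erule exhausting_seqE) (auto simp: norm_interior_def)

lemma exhausting_seq_Union: "exhausting_seq Om Omk \<Longrightarrow> Om = (\<Union>k. Omk k)"
  by (erule exhausting_seqE)

lemma exhausting_seq_bounded: "exhausting_seq Om Omk \<Longrightarrow> \<exists>C. \<forall>x\<in>Omk k. tnorm x \<le> C"
  by (erule exhausting_seqE) (erule allE)

lemma exhausting_seq_bop:
  assumes "exhausting_seq Om Omk" "x \<in> Om"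
  shows "x i \<in> bop UNIV UNIV"
proof -
  have "Om \<subseteq> BHt" by (rule exhausting_seqE[OF assms(1)])
  then have "x \<in> BHt" using assms(2) by (rule subsetD)
  then show ?thesis by (simp add: BHt_def BH_def)
qed

lemma exhausting_seq_unitary_dsum:
  assumes "exhausting_seq Om Omk" "l \<noteq> 0" "\<And>n. enat n < l \<Longrightarrow> xs n \<in> Omk k"
  obtains u where "unitary_op UNIV (Hl l) u" "tconj l u (tdsum l xs) \<in> Omk k"
proof -
  have "\<forall>k l xs. l \<noteq> 0 \<longrightarrow> (\<forall>n. enat n < l \<longrightarrow> xs n \<in> Omk k) \<longrightarrow>
      (\<exists>u. unitary_op UNIV (Hl l) u \<and> tconj l u (tdsum l xs) \<in> Omk k)"
    by (rule exhausting_seqE[OF assms(1)])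
  then have "\<exists>u. unitary_op UNIV (Hl l) u \<and> tconj l u (tdsum l xs) \<in> Omk k"
    using assms(2,3) by simp
  then show thesis using that by blast
qed

lemma exhausting_seq_common_level:
  assumes ex: "exhausting_seq Om Omk" and "x \<in> Om" "y \<in> Om"
  obtains k where "x \<in> Omk k" "y \<in> Omk k"
proof -
  have mono: "mono Omk" using exhausting_seq_Suc[OF ex] by (rule incseq_SucI)
  obtain k1 k2 where "x \<in> Omk k1" "y \<in> Omk k2"
    using assms exhausting_seq_Union[OF ex] by blast
  then show thesis
    using monoD[OF mono, of k1 "max k1 k2"] monoD[OF mono, of k2 "max k1 k2"] that by auto
qed

lemma nc_function_bop:
  assumes "nc_function Om f" "x \<in> Om"
  shows "f x i \<in> bop UNIV UNIV"
proof -
  have "\<forall>x\<in>Om. f x \<in> BHt" using assms(1) unfolding nc_function_def by (elim conjE)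
  then have "f x \<in> BHt" using assms(2) by (rule bspec)
  then show ?thesis by (simp add: BHt_def BH_def)
qed

lemma nc_function_dsum2:
  assumes "nc_function Om f" "x \<in> Om" "y \<in> Om" "binvertible UNIV (Hl 2) s"
    "tconj 2 s (tdsum 2 (pair_seq x y)) \<in> Om"
  shows "f (tconj 2 s (tdsum 2 (pair_seq x y))) = tconj 2 s (tdsum 2 (pair_seq (f x) (f y)))"
proof -
  have "\<forall>x\<in>Om. \<forall>y\<in>Om. \<forall>s. binvertible UNIV (Hl 2) s \<longrightarrow>
      tconj 2 s (tdsum 2 (pair_seq x y)) \<in> Om \<longrightarrow>
      f (tconj 2 s (tdsum 2 (pair_seq x y))) = tconj 2 s (tdsum 2 (pair_seq (f x) (f y)))"
    using assms(1) unfolding nc_function_def by (elim conjE)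
  then show ?thesis using assms(2-5) by blast
qed

section \<open>NC functions respect intertwinings\<close>

lemma tdsum_pair_seq: "tdsum l (pair_seq x y) i = dsum l (pair_seq (x i) (y i))"
  unfolding tdsum_def by (rule arg_cong[where f = "dsum l"]) auto

lemma tconj_shear_comp:
  assumes u: "binvertible UNIV (Hl 2) u" and T: "T \<in> bop UNIV UNIV"
  shows "tconj 2 (shear T 1 \<circ> u) Z i = binv UNIV (Hl 2) u \<circ> (shear T (-1) \<circ> Z i \<circ> shear T 1) \<circ> u"
  using binvertible_comp(2)[OF u binvertible_shear[OF T]] by (simp add: tconj_def binv_shear[OF T] o_assoc)

lemma nc_function_commutes_with_shear:
  fixes f :: "('d::finite) tup \<Rightarrow> ('r::finite) tup"
  assumes ex: "exhausting_seq Om Omk" and nc: "nc_function Om f"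
    and x: "x \<in> Om" and y: "y \<in> Om" and T: "T \<in> bop UNIV UNIV"
    and commutes: "\<And>i. shear T (-1) \<circ> dsum 2 (pair_seq (x i) (y i)) \<circ> shear T 1
      = dsum 2 (pair_seq (x i) (y i))"
  shows "shear T (-1) \<circ> dsum 2 (pair_seq (f x j) (f y j)) \<circ> shear T 1
    = dsum 2 (pair_seq (f x j) (f y j))"
proof -
  obtain k where k: "x \<in> Omk k" "y \<in> Omk k" using exhausting_seq_common_level[OF ex x y] .
  obtain u where "unitary_op UNIV (Hl 2) u" and Z: "tconj 2 u (tdsum 2 (pair_seq x y)) \<in> Omk k"
    by (rule exhausting_seq_unitary_dsum[OF ex, of 2 "pair_seq x y" k]) (use k in auto)
  have u: "binvertible UNIV (Hl 2) u"
    using \<open>unitary_op UNIV (Hl 2) u\<close> by (rule unitary_op_imp_binvertible)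
  define s where "s = shear T 1 \<circ> u"
  have s: "binvertible UNIV (Hl 2) s"
    unfolding s_def by (rule binvertible_comp(1)[OF u binvertible_shear[OF T]])
  have "tconj 2 s (tdsum 2 (pair_seq x y)) i = tconj 2 u (tdsum 2 (pair_seq x y)) i" for i
    using commutes[of i]
    unfolding s_def tconj_shear_comp[OF u T] unfolding tconj_def tdsum_pair_seq by simp
  then have same_point: "tconj 2 s (tdsum 2 (pair_seq x y)) = tconj 2 u (tdsum 2 (pair_seq x y))" ..
  have in_Om: "tconj 2 u (tdsum 2 (pair_seq x y)) \<in> Om"
    by (rule subsetD[OF exhausting_seq_subset[OF ex] Z])
  have "tconj 2 s (tdsum 2 (pair_seq (f x) (f y))) = f (tconj 2 u (tdsum 2 (pair_seq x y)))"
    using nc_function_dsum2[OF nc x y s] same_point in_Om by simp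
  also have "\<dots> = tconj 2 u (tdsum 2 (pair_seq (f x) (f y)))"
    by (rule nc_function_dsum2[OF nc x y u in_Om])
  finally have "tconj 2 s (tdsum 2 (pair_seq (f x) (f y))) j = tconj 2 u (tdsum 2 (pair_seq (f x) (f y))) j"
    by simp
  then have conj_eq:
    "binv UNIV (Hl 2) u \<circ> (shear T (-1) \<circ> dsum 2 (pair_seq (f x j) (f y j)) \<circ> shear T 1) \<circ> u
      = binv UNIV (Hl 2) u \<circ> dsum 2 (pair_seq (f x j) (f y j)) \<circ> u"
    unfolding s_def tconj_shear_comp[OF u T] unfolding tconj_def tdsum_pair_seq .
  have D: "dsum 2 (pair_seq (f x j) (f y j)) \<in> bop (Hl 2) (Hl 2)"
    by (rule dsum2_in_bop[OF nc_function_bop[OF nc x] nc_function_bop[OF nc y]])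
  show ?thesis
    by (rule binv_conj_cancel[OF u bop_comp[OF shear_in_bop[OF T] bop_comp[OF D shear_in_bop[OF T]]]
          D conj_eq])
qed

lemma nc_function_intertwining:
  fixes f :: "('d::finite) tup \<Rightarrow> ('r::finite) tup"
  assumes ex: "exhausting_seq Om Omk" and nc: "nc_function Om f"
    and x: "x \<in> Om" and y: "y \<in> Om" and T: "T \<in> bop UNIV UNIV"
    and intertwines: "\<And>i v. v \<in> l2v UNIV \<Longrightarrow> x i (T v) = T (y i v)"
    and v: "v \<in> l2v UNIV"
  shows "f x j (T v) = T (f y j v)"
proof -
  have "shear T (-1) \<circ> dsum 2 (pair_seq (x i) (y i)) \<circ> shear T 1 = dsum 2 (pair_seq (x i) (y i))"
    for i
    using shear_conj_dsum2_iff[OF T exhausting_seq_bop[OF ex x] exhausting_seq_bop[OF ex y]]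
      intertwines by blast
  from nc_function_commutes_with_shear[OF ex nc x y T this]
  show ?thesis
    using shear_conj_dsum2_iff[OF T nc_function_bop[OF nc x] nc_function_bop[OF nc y]] v by blast
qed

section \<open>Direct sums of arbitrary length\<close>

lemma sqnorm_block_proj_le: "sqnorm (block_proj l n w) \<le> sqnorm w"
  by (cases "w \<in> l2v (Hl l)") (simp_all add: block_proj_def sqnorm_row_le sqnorm_nonneg)

lemma dsum_in_bop_of_tnorm_le:
  fixes xs :: "nat \<Rightarrow> ('d::finite) tup"
  assumes xs: "\<And>n. enat n < l \<Longrightarrow> xs n i \<in> bop UNIV UNIV"
    and C: "\<And>n. enat n < l \<Longrightarrow> tnorm (xs n) \<le> C"
  shows "dsum l (\<lambda>n. xs n i) \<in> bop (Hl l) (Hl l)"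
proof (rule dsum_in_bop[OF xs])
  fix n and u :: vec assume n: "enat n < l" and u: "u \<in> l2v UNIV"
  have "opnorm UNIV (xs n i) \<le> max C 0" using opnorm_le_tnorm[of "xs n" i] C[OF n] by linarith
  then have "vnorm (xs n i u) \<le> max C 0 * vnorm u"
    using norm_apply_le_opnorm[OF xs[OF n] u] mult_right_mono[OF _ vnorm_nonneg[of u]] by fastforce
  then show "sqnorm (xs n i u) \<le> (max C 0)^2 * sqnorm u" by (rule vnorm_le_imp_sqnorm_le) simp
qed simp_all

lemma block_proj_conj_dsum:
  assumes s: "binvertible UNIV (Hl l) s" and D: "dsum l A \<in> bop (Hl l) (Hl l)"
    and n: "enat n < l" and v: "v \<in> l2v UNIV"
  shows "block_proj l n (s ((binv UNIV (Hl l) s \<circ> dsum l A \<circ> s) v)) = A n (block_proj l n (s v))"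
proof -
  have sv: "s v \<in> l2v (Hl l)" by (rule bop_maps_l2v[OF binvertible_imp_bop[OF s] v])
  then have "s ((binv UNIV (Hl l) s \<circ> dsum l A \<circ> s) v) = dsum l A (s v)"
    by (simp add: self_apply_binv[OF s] bop_maps_l2v[OF D])
  then show ?thesis
    using sv n bop_maps_l2v[OF D sv] by (simp add: block_proj_apply dsum_apply)
qed

lemma eq_conj_dsumI:
  assumes s: "binvertible UNIV (Hl l) s" and F: "F \<in> bop UNIV UNIV"
    and G: "\<And>n. enat n < l \<Longrightarrow> G n \<in> bop UNIV UNIV"
    and blocks: "\<And>n v. enat n < l \<Longrightarrow> v \<in> l2v UNIV \<Longrightarrow>
      block_proj l n (s (F v)) = G n (block_proj l n (s v))"
  shows "F = binv UNIV (Hl l) s \<circ> dsum l G \<circ> s"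
proof
  fix v
  have s_bop: "s \<in> bop UNIV (Hl l)" by (rule binvertible_imp_bop[OF s])
  show "F v = (binv UNIV (Hl l) s \<circ> dsum l G \<circ> s) v"
  proof (cases "v \<in> l2v UNIV")
    case True
    have sv: "s v \<in> l2v (Hl l)" and sFv: "s (F v) \<in> l2v (Hl l)"
      using True s_bop bop_maps_l2v[OF F True] by (simp_all add: bop_maps_l2v)
    have "s (F v) = dsum l G (s v)"
    proof (rule ext, clarify)
      fix n i
      show "s (F v) (n, i) = dsum l G (s v) (n, i)"
        using blocks[OF _ True, of n] sv sFv l2v_vanishes[OF sFv, of "(n, i)"]
        by (cases "enat n < l") (simp_all add: dsum_apply block_proj_apply fun_eq_iff)
    qed
    then show ?thesis
      using binv_apply_self[OF s bop_maps_l2v[OF F True]] by simp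
  next
    case False
    have "dsum l G (\<lambda>_. 0) = (\<lambda>_. 0)" using bop_zero[OF G] by (auto simp: fun_eq_iff dsum_apply)
    then show ?thesis
      using False by (simp add: bop_outside[OF F] bop_outside[OF s_bop] bop_zero[OF binv_in_bop[OF s]])
  qed
qed

lemma opnorm_block_le:
  assumes s: "binvertible UNIV (Hl l) s" and F: "F \<in> bop UNIV UNIV" and G: "G \<in> bop UNIV UNIV"
    and n: "enat n < l"
    and block: "\<And>v. v \<in> l2v UNIV \<Longrightarrow> block_proj l n (s (F v)) = G (block_proj l n (s v))"
  shows "opnorm UNIV G \<le> opnorm (Hl l) (s \<circ> F \<circ> binv UNIV (Hl l) s)"
proof (rule opnorm_least)
  have SF: "s \<circ> F \<circ> binv UNIV (Hl l) s \<in> bop (Hl l) (Hl l)"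
    by (rule bop_comp[OF binv_in_bop[OF s] bop_comp[OF F binvertible_imp_bop[OF s]]])
  then show "opnorm (Hl l) (s \<circ> F \<circ> binv UNIV (Hl l) s) \<ge> 0" by (rule opnorm_nonneg)
  fix u :: vec assume u: "u \<in> l2v UNIV"
  define w where "w = block_emb n u"
  have w: "w \<in> l2v (Hl l)" unfolding w_def by (rule block_emb_in_l2v[OF u n])
  have "G u = block_proj l n ((s \<circ> F \<circ> binv UNIV (Hl l) s) w)"
    using block[OF bop_maps_l2v[OF binv_in_bop[OF s] w]] self_apply_binv[OF s w]
      block_proj_block_emb[OF n u] by (simp add: w_def)
  then have "vnorm (G u) \<le> vnorm ((s \<circ> F \<circ> binv UNIV (Hl l) s) w)"
    using sqnorm_block_proj_le by (simp add: vnorm_eq_sqrt_sqnorm)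
  also have "\<dots> \<le> opnorm (Hl l) (s \<circ> F \<circ> binv UNIV (Hl l) s) * vnorm w"
    by (rule norm_apply_le_opnorm[OF SF w])
  finally show "vnorm (G u) \<le> opnorm (Hl l) (s \<circ> F \<circ> binv UNIV (Hl l) s) * vnorm u"
    by (simp add: w_def vnorm_eq_sqrt_sqnorm sqnorm_block_emb[OF u n])
qed

lemma tconj_tdsum_apply: "tconj l s (tdsum l xs) i = binv UNIV (Hl l) s \<circ> dsum l (\<lambda>n. xs n i) \<circ> s"
  by (simp add: tconj_def tdsum_def)

lemma nc_function_dsum_blocks:
  fixes f :: "('d::finite) tup \<Rightarrow> ('r::finite) tup"
  assumes ex: "exhausting_seq Om Omk" and nc: "nc_function Om f"
    and xs: "\<And>n. enat n < l \<Longrightarrow> xs n \<in> Om" and C: "\<And>n. enat n < l \<Longrightarrow> tnorm (xs n) \<le> C"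
    and s: "binvertible UNIV (Hl l) s" and X: "tconj l s (tdsum l xs) \<in> Om"
    and n: "enat n < l" and v: "v \<in> l2v UNIV"
  shows "block_proj l n (s (f (tconj l s (tdsum l xs)) j v)) = f (xs n) j (block_proj l n (s v))"
proof -
  have T: "block_proj l n \<circ> s \<in> bop UNIV UNIV"
    by (rule bop_comp[OF binvertible_imp_bop[OF s] block_proj_in_bop])
  have D: "dsum l (\<lambda>n. xs n i) \<in> bop (Hl l) (Hl l)" for i
    using exhausting_seq_bop[OF ex xs] C by (rule dsum_in_bop_of_tnorm_le[where xs = xs and C = C])
  have intertwines:
    "xs n i ((block_proj l n \<circ> s) v') = (block_proj l n \<circ> s) (tconj l s (tdsum l xs) i v')"
    if "v' \<in> l2v UNIV" for i v'
    using block_proj_conj_dsum[OF s D[of i] n that]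
    by (simp add: tconj_tdsum_apply)
  have "f (xs n) j ((block_proj l n \<circ> s) v) = (block_proj l n \<circ> s) (f (tconj l s (tdsum l xs)) j v)"
    using nc_function_intertwining[OF ex nc xs[OF n] X T, where j = j] intertwines v by blast
  then show ?thesis by simp
qed

lemma nc_function_direct_sum:
  fixes f :: "('d::finite) tup \<Rightarrow> ('r::finite) tup"
  assumes ex: "exhausting_seq Om Omk" and nc: "nc_function Om f"
    and xs: "\<And>n. enat n < l \<Longrightarrow> xs n \<in> Om" and C: "\<And>n. enat n < l \<Longrightarrow> tnorm (xs n) \<le> C"
    and s: "binvertible UNIV (Hl l) s" and X: "tconj l s (tdsum l xs) \<in> Om"
  shows "\<exists>C. \<forall>n. enat n < l \<longrightarrow> tnorm (f (xs n)) \<le> C"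
    and "f (tconj l s (tdsum l xs)) = tconj l s (tdsum l (\<lambda>n. f (xs n)))"
proof -
  let ?X = "tconj l s (tdsum l xs)"
  have blocks: "block_proj l n (s (f ?X j v)) = f (xs n) j (block_proj l n (s v))"
    if "enat n < l" "v \<in> l2v UNIV" for n j v
    using ex nc xs C s X that by (rule nc_function_dsum_blocks)
  have "tnorm (f (xs n)) \<le> Max (range (\<lambda>j. opnorm (Hl l) (s \<circ> f ?X j \<circ> binv UNIV (Hl l) s)))"
    if n: "enat n < l" for n
  proof (rule tnorm_leI)
    fix j
    have "opnorm UNIV (f (xs n) j) \<le> opnorm (Hl l) (s \<circ> f ?X j \<circ> binv UNIV (Hl l) s)"
      by (rule opnorm_block_le[OF s nc_function_bop[OF nc X, of j] nc_function_bop[OF nc xs[OF n], of j] n])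
        (rule blocks[OF n])
    also have "\<dots> \<le> Max (range (\<lambda>j. opnorm (Hl l) (s \<circ> f ?X j \<circ> binv UNIV (Hl l) s)))"
      by (rule Max_ge) simp_all
    finally show "opnorm UNIV (f (xs n) j) \<le> \<dots>" .
  qed
  then show "\<exists>C. \<forall>n. enat n < l \<longrightarrow> tnorm (f (xs n)) \<le> C" by blast
  have "f ?X j = binv UNIV (Hl l) s \<circ> dsum l (\<lambda>n. f (xs n) j) \<circ> s" for j
    by (rule eq_conj_dsumI[OF s nc_function_bop[OF nc X, of j]])
      (erule nc_function_bop[OF nc xs], erule (1) blocks)
  then show "f ?X = tconj l s (tdsum l (\<lambda>n. f (xs n)))"
    by (simp add: fun_eq_iff tconj_tdsum_apply del: comp_apply)
qed

lemma nc_function_bounded_on_level: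
  fixes f :: "('d::finite) tup \<Rightarrow> ('r::finite) tup"
  assumes ex: "exhausting_seq Om Omk" and nc: "nc_function Om f"
  shows "\<exists>C. \<forall>x\<in>Omk k. tnorm (f x) \<le> C"
proof (rule ccontr)
  assume "\<nexists>C. \<forall>x\<in>Omk k. tnorm (f x) \<le> C"
  then have "\<forall>n::nat. \<exists>x. x \<in> Omk k \<and> tnorm (f x) > real n" by (meson not_le)
  then obtain xs where xs: "\<And>n. xs n \<in> Omk k" and big: "\<And>n. tnorm (f (xs n)) > real n"
    by metis
  obtain u where u: "unitary_op UNIV (Hl \<infinity>) u" and U: "tconj \<infinity> u (tdsum \<infinity> xs) \<in> Omk k"
    by (rule exhausting_seq_unitary_dsum[OF ex, of \<infinity> xs k]) (simp_all add: xs)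
  obtain B where B: "\<forall>x\<in>Omk k. tnorm x \<le> B" using exhausting_seq_bounded[OF ex] by blast
  have "\<exists>C. \<forall>n. enat n < \<infinity> \<longrightarrow> tnorm (f (xs n)) \<le> C"
  proof (rule nc_function_direct_sum(1)[OF ex nc])
    show "xs n \<in> Om" for n by (rule subsetD[OF exhausting_seq_subset[OF ex] xs])
    show "tnorm (xs n) \<le> B" for n by (rule bspec[OF B xs])
    show "binvertible UNIV (Hl \<infinity>) u" by (rule unitary_op_imp_binvertible[OF u])
    show "tconj \<infinity> u (tdsum \<infinity> xs) \<in> Om" by (rule subsetD[OF exhausting_seq_subset[OF ex] U])
  qed
  then obtain C where C: "\<And>n. tnorm (f (xs n)) \<le> C" by auto
  obtain n :: nat where "real n > C" using reals_Archimedean2 by blast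
  then show False using big[of n] C[of n] by linarith
qed

theorem mainTheorem8:
  fixes Om :: "('d::finite) tup set" and Omk :: "nat \<Rightarrow> 'd tup set"
    and f :: "'d tup \<Rightarrow> ('r::finite) tup"
  assumes "exhausting_seq Om Omk" and "nc_function Om f"
  shows "(\<forall>k. \<exists>C. \<forall>x\<in>Omk k. tnorm (f x) \<le> C)
    \<and> (\<forall>(l::enat) (xs :: nat \<Rightarrow> 'd tup) s. l \<noteq> 0 \<longrightarrow>
         (\<forall>n. enat n < l \<longrightarrow> xs n \<in> Om) \<longrightarrow>
         (\<exists>C. \<forall>n. enat n < l \<longrightarrow> tnorm (xs n) \<le> C) \<longrightarrow>
         binvertible UNIV (Hl l) s \<longrightarrow>
         tconj l s (tdsum l xs) \<in> Om \<longrightarrow>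
         (\<exists>C. \<forall>n. enat n < l \<longrightarrow> tnorm (f (xs n)) \<le> C)
         \<and> f (tconj l s (tdsum l xs)) = tconj l s (tdsum l (\<lambda>n. f (xs n))))"
proof (intro conjI allI impI)
  show "\<exists>C. \<forall>x\<in>Omk k. tnorm (f x) \<le> C" for k by (rule nc_function_bounded_on_level[OF assms])
next
  fix l :: enat and xs :: "nat \<Rightarrow> 'd tup" and s
  assume xs_Om: "\<forall>n. enat n < l \<longrightarrow> xs n \<in> Om" and "\<exists>C. \<forall>n. enat n < l \<longrightarrow> tnorm (xs n) \<le> C"
    and s: "binvertible UNIV (Hl l) s" and X: "tconj l s (tdsum l xs) \<in> Om"
  then obtain C where C: "\<And>n. enat n < l \<Longrightarrow> tnorm (xs n) \<le> C" by blast
  have xs: "\<And>n. enat n < l \<Longrightarrow> xs n \<in> Om" using xs_Om by blast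
  show "\<exists>C. \<forall>n. enat n < l \<longrightarrow> tnorm (f (xs n)) \<le> C"
    using xs C s X by (rule nc_function_direct_sum(1)[OF assms])
  show "f (tconj l s (tdsum l xs)) = tconj l s (tdsum l (\<lambda>n. f (xs n)))"
    using xs C s X by (rule nc_function_direct_sum(2)[OF assms])
qed

end
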